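(* Let $K, L, N, Z$ be positive integers with $Z \ge 2$. Let $\Omega \subseteq \{0,1,\dots,N-1\}$ be arbitrary. Let $\{\mathbf{a}_i\}_{i=1}^K$ be a $(K,L,Z)$ zero-correlation zone (ZCZ) sequence set, where $\mathbf{a}_i=[a^i_0,\dots,a^i_{L-1}]^{\mathrm T}$ and every entry satisfies $|a^i_l|=1$. For $1\le i\le K$ let $\mathbf{B}_i=[B^i_0,\dots,B^i_{N-1}]^{\mathrm T}\in\mathbb{C}^N$ be arbitrary with $B^i_k=0$ for all $k\in\Omega$, let $\mathbf{b}_i=\mathcal{F}_N^{\mathrm H}\mathbf{B}_i$, and define the length-$NL$ sequence $\mathbf{c}_i=\mathbf{a}_i\otimes\mathbf{b}_i$, i.e. the $(lN+n)$-th entry of $\mathbf{c}_i$ is $a^i_l\, b^i_n$ for $0\le l\le L-1$, $0\le n\le N-1$. Then: (1) for all $i\neq j$, $R_{\mathbf{c}_i,\mathbf{c}_j}(\tau)=0$ for all integers $\tau$ with $|\tau|<NZ-N$ (so $\{\mathbf{c}_i\}$ is a $(K,NL,NZ-N)$ quasi-ZCZ sequence set); (2) each $\mathbf{c}_i$ satisfies the spectrum hole constraint $\Omega$, in the sense that for each $0\le l\le L-1$ the $l$-th block $[c^i_{lN},\dots,c^i_{lN+N-1}]^{\mathrm T}=a^i_l\,\mathbf{b}_i$ has $N$-point DFT $a^i_l\mathbf{B}_i$, which vanishes at every position $k\in\Omega$; (3) for each $i$, $$R_{\mathbf{c}_i}(\tau)=\begin{cases} L\cdot C_{\mathbf{b}_i}(\tau),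 & |\tau|<N,\\ 0, & N\le|\tau|<NZ-N.\end{cases}$$
   Context: For length-$M$ complex sequences $\mathbf{x}=[x_0,\dots,x_{M-1}]^{\mathrm T}$, $\mathbf{y}=[y_0,\dots,y_{M-1}]^{\mathrm T}$, the periodic cross-correlation is $R_{\mathbf{x},\mathbf{y}}(\tau)=\sum_{n=0}^{M-1}x_n y^*_{n+\tau}$, with the index $n+\tau$ taken modulo $M$ (defined for all integers $\tau$); $R_{\mathbf{x}}(\tau):=R_{\mathbf{x},\mathbf{x}}(\tau)$. The aperiodic cross-correlation is $C_{\mathbf{x},\mathbf{y}}(\tau)=\sum_{n} x_n y^*_{n+\tau}$, the sum over those $n$ with $0\le n\le M-1$ and $0\le n+\tau\le M-1$ (so for $0\le\tau\le M-1$ it is $\sum_{n=0}^{M-1-\tau}x_ny^*_{n+\tau}$, and for negative $\tau$ it is $\sum_{n=-\tau}^{M-1}x_ny^*_{n+\tau}$); $C_{\mathbf{x}}(\tau):=C_{\mathbf{x},\mathbf{x}}(\tau)$. A set $\{\mathbf{a}_i\}_{i=1}^K$ of length-$L$ sequences is a $(K,L,Z)$ ZCZ sequence set if $R_{\mathbf{a}_i}(\tau)=0$ for all $i$ and all $1\le|\tau|<Z$, and $R_{\mathbf{a}_i,\mathbf{a}_j}(\tau)=0$ for all $i\ne j$ and all $0\le|\tau|<Z$; a set satisfying only the second (cross-correlation) condition is called a $(K,L,Z)$ quasi-ZCZ set. $\mathcal{F}_N=[f_{p,q}]_{p,q=0}^{N-1}$ with $f_{p,q}=\frac{1}{\sqrt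 N}e^{-2\pi\sqrt{-1}\,pq/N}$ is the unitary DFT matrix, and $\mathcal{F}_N^{\mathrm H}$ its conjugate transpose (the IDFT). $\Omega$ is the set of unavailable subcarrier positions ("spectrum hole constraint"). *)

theory Defs
  imports Complex_Main
begin

text \<open>Sequences of length M are functions nat => complex; only indices 0..M-1 matter.\<close>

definition percorr :: "nat \<Rightarrow> (nat \<Rightarrow> complex) \<Rightarrow> (nat \<Rightarrow> complex) \<Rightarrow> int \<Rightarrow> complex" where
  "percorr M x y \<tau> = (\<Sum>n<M. x n * cnj (y (nat ((int n + \<tau>) mod int M))))"

definition apercorr :: "nat \<Rightarrow> (nat \<Rightarrow> complex) \<Rightarrow> (nat \<Rightarrow> complex) \<Rightarrow> int \<Rightarrow> complex" where
  "apercorr M x y \<tau> =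
     (\<Sum>n\<in>{n. n < M \<and> 0 \<le> int n + \<tau> \<and> int n + \<tau> < int M}. x n * cnj (y (nat (int n + \<tau>))))"

definition zcz_set :: "nat \<Rightarrow> nat \<Rightarrow> nat \<Rightarrow> (nat \<Rightarrow> nat \<Rightarrow> complex) \<Rightarrow> bool" where
  "zcz_set K L Z a \<longleftrightarrow>
     (\<forall>i\<in>{1..K}. \<forall>\<tau>::int. 1 \<le> \<bar>\<tau>\<bar> \<and> \<bar>\<tau>\<bar> < int Z \<longrightarrow> percorr L (a i) (a i) \<tau> = 0) \<and>
     (\<forall>i\<in>{1..K}. \<forall>j\<in>{1..K}. i \<noteq> j \<longrightarrow>
        (\<forall>\<tau>::int. \<bar>\<tau>\<bar> < int Z \<longrightarrow> percorr L (a i) (a j) \<tau> = 0))"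

definition quasi_zcz_set :: "nat \<Rightarrow> nat \<Rightarrow> nat \<Rightarrow> (nat \<Rightarrow> nat \<Rightarrow> complex) \<Rightarrow> bool" where
  "quasi_zcz_set K L Z a \<longleftrightarrow>
     (\<forall>i\<in>{1..K}. \<forall>j\<in>{1..K}. i \<noteq> j \<longrightarrow>
        (\<forall>\<tau>::int. \<bar>\<tau>\<bar> < int Z \<longrightarrow> percorr L (a i) (a j) \<tau> = 0))"

definition dft :: "nat \<Rightarrow> (nat \<Rightarrow> complex) \<Rightarrow> nat \<Rightarrow> complex" where
  "dft N x p = (\<Sum>q<N. (1 / sqrt (real N)) * exp (- 2 * pi * \<i> * of_nat (p * q) / of_nat N) * x q)"

definition idft :: "nat \<Rightarrow> (nat \<Rightarrow> complex) \<Rightarrow> nat \<Rightarrow> complex" where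
  "idft N X q = (\<Sum>p<N. (1 / sqrt (real N)) * exp (2 * pi * \<i> * of_nat (p * q) / of_nat N) * X p)"

end

theory Submission
  imports Defs
begin

text \<open>Write \<open>\<tau> = u N + v\<close> with \<open>0 \<le> v < N\<close>. Index \<open>l N + n\<close> of the Kronecker sequence
  \<open>x \<otimes> p\<close> carries \<open>x l * p n\<close>, and a cyclic shift by \<open>\<tau>\<close> moves position \<open>n\<close> of block \<open>l\<close> to
  position \<open>n + v\<close> of block \<open>l + u\<close> when \<open>n + v < N\<close>, and to position \<open>n + v - N\<close> of block
  \<open>l + u + 1\<close> otherwise. Hence the periodic correlation of \<open>x \<otimes> p\<close> and \<open>y \<otimes> q\<close> at \<open>\<tau>\<close> is
  \<open>R x y u * C p q v + R x y (u + 1) * C p q (v - N)\<close>, with \<open>R\<close> periodic and \<open>C\<close> aperiodic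
  correlation. For \<open>|\<tau>| < N Z - N\<close> both \<open>|u|\<close> and \<open>|u + 1|\<close> are below \<open>Z\<close>, so the zero-correlation
  zone of the \<open>a i\<close> kills every term except \<open>R (a i) (a i) 0 = L\<close>, which occurs only for \<open>|\<tau>| < N\<close>.
  The spectral claim is the inversion formula \<open>F F\<^sup>H = I\<close>, i.e. orthogonality of the \<open>N\<close>-th roots
  of unity.\<close>

lemma sum_lessThan_mult_blocks:
  fixes f :: "nat \<Rightarrow> 'a::comm_monoid_add"
  shows "(\<Sum>m<N * L. f m) = (\<Sum>l<L. \<Sum>n<N. f (l * N + n))"
proof -
  have shift: "sum f {k..<k + N} = (\<Sum>n<N. f (k + n))" for k
    using sum.shift_bounds_nat_ivl[of f 0 k N] by (simp add: atLeast0LessThan add.commute)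
  have "(\<Sum>m<N * L. f m) = (\<Sum>l<L. sum f {l * N..<l * N + N})"
    using sum.nat_group[of f N L] by (simp add: mult.commute)
  also have "\<dots> = (\<Sum>l<L. \<Sum>n<N. f (l * N + n))"
    by (simp only: shift)
  finally show ?thesis .
qed

lemma mod_mult_add_mult:
  fixes A :: int
  assumes "w < N"
  shows "(A * int N + int w) mod (int N * int L) = A mod int L * int N + int w"
  using assms zmod_zmult2_eq[of "int L" "A * int N + int w" "int N"] by simp

lemma abs_div_less_of_abs_less_mult_diff:
  fixes \<tau> :: int
  assumes "N > 0" "\<bar>\<tau>\<bar> < int (N * Z - N)"
  shows "\<bar>\<tau> div int N\<bar> < int Z" "\<bar>\<tau> div int N + 1\<bar> < int Z"
proof -
  have "Z \<ge> 1"
    using assms by (cases Z) auto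
  then have "\<bar>\<tau>\<bar> < (int Z - 1) * int N"
    using assms by (simp add: of_nat_diff algebra_simps)
  then have "- (int Z - 1) * int N < \<tau>" "\<tau> < (int Z - 1) * int N"
    unfolding mult_minus_left by linarith+
  moreover have "\<tau> div int N * int N \<le> \<tau>" "\<tau> < (\<tau> div int N + 1) * int N"
    unfolding distrib_right
    using div_mult_mod_eq[of \<tau> "int N"] pos_mod_sign[of "int N" \<tau>] pos_mod_bound[of "int N" \<tau>] assms
    by linarith+
  ultimately have "\<tau> div int N * int N < (int Z - 1) * int N" "- (int Z - 1) * int N < (\<tau> div int N + 1) * int N"
    by linarith+
  then have "\<tau> div int N < int Z - 1" "- (int Z - 1) < \<tau> div int N + 1"
    using assms by (simp_all only: mult_less_cancel_right)
  then show "\<bar>\<tau> div int N\<bar> < int Z" "\<bar>\<tau> div int N + 1\<bar> < int Z"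
    by auto
qed

lemma sum_cis_multiples:
  fixes d :: int
  assumes "N > 0"
  shows "(\<Sum>q<N. cis (2 * pi * of_int d * real q / real N)) = (if int N dvd d then of_nat N else 0)"
proof -
  define \<omega> where "\<omega> = cis (2 * pi * of_int d / real N)"
  have pow: "\<omega> ^ q = cis (2 * pi * of_int d * real q / real N)" for q
    by (simp add: \<omega>_def DeMoivre mult_ac)
  have \<omega>_eq_1: "\<omega> = 1 \<longleftrightarrow> int N dvd d"
  proof
    assume "\<omega> = 1"
    then obtain m :: int where "2 * pi * of_int d / real N = of_int m * 2 * pi"
      by (auto simp: \<omega>_def complex_eq_iff cos_one_2pi_int)
    with assms have "real_of_int d = real_of_int (m * int N)"
      by (simp add: field_simps)
    then show "int N dvd d"
      by (simp only: of_int_eq_iff) simp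
  next
    assume "int N dvd d"
    then obtain m where "d = int N * m" by blast
    with assms have "2 * pi * of_int d / real N = 2 * pi * of_int m"
      by simp
    then show "\<omega> = 1"
      by (simp add: \<omega>_def cis_multiple_2pi)
  qed
  have "\<omega> ^ N = 1"
    using assms by (simp add: pow cis_multiple_2pi)
  then have "(\<Sum>q<N. \<omega> ^ q) = (if \<omega> = 1 then of_nat N else 0)"
    by (simp add: geometric_sum)
  then show ?thesis
    by (simp add: pow \<omega>_eq_1)
qed

lemma dft_idft:
  assumes "k < N"
  shows "dft N (idft N X) k = X k"
proof -
  have N: "N > 0" using assms by simp
  have kernel: "exp (2 * pi * \<i> * of_nat (p * q) / of_nat N) * exp (- 2 * pi * \<i> * of_nat (k * q) / of_nat N)
      = cis (2 * pi * (real p - real k) * real q / real N)" for p q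
    by (simp add: cis_conv_exp flip: exp_add) (simp add: field_simps diff_divide_distrib)
  have orthogonality: "(\<Sum>q<N. cis (2 * pi * (real p - real k) * real q / real N))
      = (if p = k then of_nat N else 0)" if "p < N" for p
  proof -
    have "int N dvd int p - int k \<longleftrightarrow> p = k"
    proof
      assume "int N dvd int p - int k"
      then show "p = k"
        using that assms dvd_imp_le_int[of "int p - int k" "int N"] by (cases "p = k") linarith+
    qed simp
    then show ?thesis
      using sum_cis_multiples[OF N, of "int p - int k"] by simp
  qed
  define s :: complex where "s = 1 / sqrt (real N)"
  have "dft N (idft N X) k = (\<Sum>q<N. \<Sum>p<N. (s * s * X p) *
      cis (2 * pi * (real p - real k) * real q / real N))"
    unfolding dft_def idft_def s_def kernel[symmetric]
    by (simp add: sum_distrib_left mult_ac)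
  also have "\<dots> = (\<Sum>p<N. (s * s * X p) *
      (\<Sum>q<N. cis (2 * pi * (real p - real k) * real q / real N)))"
    by (subst sum.swap) (simp add: sum_distrib_left)
  also have "\<dots> = s * s * X k * of_nat N"
    using assms by (simp add: orthogonality if_distrib sum.delta cong: if_cong)
  also have "\<dots> = X k"
    using N by (simp add: s_def flip: of_real_mult)
  finally show ?thesis .
qed

definition kron_seq :: "nat \<Rightarrow> (nat \<Rightarrow> 'a::times) \<Rightarrow> (nat \<Rightarrow> 'a) \<Rightarrow> nat \<Rightarrow> 'a" where
  "kron_seq N x p m = x (m div N) * p (m mod N)"

lemma kron_seq_block:
  "n < N \<Longrightarrow> kron_seq N x p (l * N + n) = x l * p n"
  by (simp add: kron_seq_def)

lemma kron_seq_cyclic_index: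
  fixes A :: int
  assumes "w < N" "L > 0"
  shows "kron_seq N x p (nat ((A * int N + int w) mod int (N * L))) = x (nat (A mod int L)) * p w"
proof -
  have "nat ((A * int N + int w) mod int (N * L)) = nat (A mod int L) * N + w"
    using assms mod_mult_add_mult[of w N A L] by (simp add: nat_add_distrib nat_mult_distrib)
  then show ?thesis
    using assms by (simp add: kron_seq_block)
qed

lemma dft_kron_seq_block:
  "dft N (\<lambda>n. kron_seq N x p (l * N + n)) k = x l * dft N p k"
proof -
  have "dft N (\<lambda>n. kron_seq N x p (l * N + n)) k = dft N (\<lambda>n. x l * p n) k"
    unfolding dft_def by (intro sum.cong refl) (simp add: kron_seq_block)
  also have "\<dots> = x l * dft N p k"
    unfolding dft_def by (simp add: sum_distrib_left mult_ac)
  finally show ?thesis .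
qed

lemma apercorr_nonneg:
  assumes "v < N"
  shows "apercorr N p q (int v) = (\<Sum>n<N. if n + v < N then p n * cnj (q (n + v)) else 0)"
proof -
  have support: "{n. n < N \<and> 0 \<le> int n + int v \<and> int n + int v < int N} = {n \<in> {..<N}. n + v < N}"
    by auto
  show ?thesis
    unfolding apercorr_def support sum.inter_filter[OF finite_lessThan, symmetric]
    by (simp add: nat_int_add)
qed

lemma apercorr_neg:
  assumes "v < N"
  shows "apercorr N p q (int v - int N) = (\<Sum>n<N. if n + v < N then 0 else p n * cnj (q (n + v - N)))"
proof -
  have support: "{n. n < N \<and> 0 \<le> int n + (int v - int N) \<and> int n + (int v - int N) < int N}
      = {n \<in> {..<N}. \<not> n + v < N}"
    using assms by auto
  have "apercorr N p q (int v - int N) = (\<Sum>n \<in> {n \<in> {..<N}. \<not> n + v < N}. p n * cnj (q (n + v - N)))"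
  proof -
    have "nat (int n + (int v - int N)) = n + v - N" if "\<not> n + v < N" for n
      using that by linarith
    then show ?thesis
      unfolding apercorr_def support by (intro sum.cong refl) auto
  qed
  also have "\<dots> = (\<Sum>n<N. if \<not> n + v < N then p n * cnj (q (n + v - N)) else 0)"
    by (rule sum.inter_filter) simp
  also have "\<dots> = (\<Sum>n<N. if n + v < N then 0 else p n * cnj (q (n + v - N)))"
    by (intro sum.cong refl) simp
  finally show ?thesis .
qed

lemma apercorr_eq_0:
  "int N \<le> \<bar>\<tau>\<bar> \<Longrightarrow> apercorr N p q \<tau> = 0"
  unfolding apercorr_def by (rule sum.neutral) auto

lemma percorr_kron_seq:
  assumes "N > 0" "L > 0"
  shows "percorr (N * L) (kron_seq N x p) (kron_seq N y q) \<tau>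
       = percorr L x y (\<tau> div int N) * apercorr N p q (\<tau> mod int N)
       + percorr L x y (\<tau> div int N + 1) * apercorr N p q (\<tau> mod int N - int N)"
proof -
  define u where "u = \<tau> div int N"
  define v where "v = nat (\<tau> mod int N)"
  have \<tau>: "\<tau> = u * int N + int v" and "v < N"
    using assms by (simp_all add: u_def v_def nat_less_iff)
  have entry: "kron_seq N x p (l * N + n) * cnj (kron_seq N y q (nat ((int (l * N + n) + \<tau>) mod int (N * L))))
      = (if n + v < N
         then x l * cnj (y (nat ((int l + u) mod int L))) * (p n * cnj (q (n + v)))
         else x l * cnj (y (nat ((int l + (u + 1)) mod int L))) * (p n * cnj (q (n + v - N))))"
    if "n < N" for l n
  proof (cases "n + v < N")
    case True
    have "int (l * N + n) + \<tau> = (int l + u) * int N + int (n + v)"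
      unfolding \<tau> by (simp add: algebra_simps)
    then have "kron_seq N y q (nat ((int (l * N + n) + \<tau>) mod int (N * L)))
        = y (nat ((int l + u) mod int L)) * q (n + v)"
      using True assms by (simp only:) (rule kron_seq_cyclic_index)
    then show ?thesis
      using True that by (simp add: kron_seq_block)
  next
    case False
    have "int (l * N + n) + \<tau> = (int l + (u + 1)) * int N + int (n + v - N)"
      unfolding \<tau> using False by (simp add: algebra_simps of_nat_diff)
    then have "kron_seq N y q (nat ((int (l * N + n) + \<tau>) mod int (N * L)))
        = y (nat ((int l + (u + 1)) mod int L)) * q (n + v - N)"
      using \<open>v < N\<close> that assms by (simp only:) (rule kron_seq_cyclic_index; linarith)
    then show ?thesis
      using False that by (simp add: kron_seq_block)
  qed
  have "percorr (N * L) (kron_seq N x p) (kron_seq N y q) \<tau>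
      = (\<Sum>l<L. \<Sum>n<N. if n + v < N
         then x l * cnj (y (nat ((int l + u) mod int L))) * (p n * cnj (q (n + v)))
         else x l * cnj (y (nat ((int l + (u + 1)) mod int L))) * (p n * cnj (q (n + v - N))))"
    unfolding percorr_def sum_lessThan_mult_blocks by (intro sum.cong refl) (rule entry, simp)
  also have "\<dots> = (\<Sum>n<N. if n + v < N
         then percorr L x y u * (p n * cnj (q (n + v)))
         else percorr L x y (u + 1) * (p n * cnj (q (n + v - N))))"
    by (subst sum.swap, intro sum.cong refl) (simp add: percorr_def sum_distrib_right)
  also have "\<dots> = percorr L x y u * apercorr N p q (int v)
      + percorr L x y (u + 1) * apercorr N p q (int v - int N)"
    using \<open>v < N\<close>
    by (simp add: apercorr_nonneg apercorr_neg sum_distrib_left if_distrib sum.distrib[symmetric]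
        cong: if_cong)
  finally show ?thesis
    using assms by (simp add: u_def v_def)
qed

lemma percorr_zero_unimodular:
  assumes "\<forall>l<L. cmod (x l) = 1"
  shows "percorr L x x 0 = of_nat L"
proof -
  have "percorr L x x 0 = (\<Sum>l<L. 1)"
    unfolding percorr_def
  proof (intro sum.cong refl)
    fix l assume "l \<in> {..<L}"
    then show "x l * cnj (x (nat ((int l + 0) mod int L))) = 1"
      using assms complex_norm_square[of "x l"] by (simp add: zmod_int)
  qed
  then show ?thesis by simp
qed

lemma percorr_kron_seq_eq_0:
  assumes "N > 0" "L > 0" "\<And>t. \<bar>t\<bar> < int Z \<Longrightarrow> percorr L x y t = 0"
    and "\<bar>\<tau>\<bar> < int (N * Z - N)"
  shows "percorr (N * L) (kron_seq N x p) (kron_seq N y q) \<tau> = 0"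
  using assms abs_div_less_of_abs_less_mult_diff[OF assms(1,4)] by (simp add: percorr_kron_seq)

lemma percorr_kron_seq_within_block:
  assumes "N > 0" "L > 0" "percorr L x y 1 = 0" "percorr L x y (- 1) = 0"
    and "\<bar>\<tau>\<bar> < int N"
  shows "percorr (N * L) (kron_seq N x p) (kron_seq N y q) \<tau> = percorr L x y 0 * apercorr N p q \<tau>"
proof (cases "0 \<le> \<tau>")
  case True
  then have "\<tau> div int N = 0" "\<tau> mod int N = \<tau>"
    using assms(5) by simp_all
  then show ?thesis
    using assms by (simp add: percorr_kron_seq)
next
  case False
  have "(\<tau> + int N) div int N = 0" "(\<tau> + int N) mod int N = \<tau> + int N"
    using assms(5) False by (simp_all only: div_pos_pos_trivial mod_pos_pos_trivial)
  then have "\<tau> div int N = - 1" "\<tau> mod int N = \<tau> + int N"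
    using assms(1) by simp_all
  then show ?thesis
    using assms by (simp add: percorr_kron_seq)
qed

lemma percorr_kron_seq_outside_block:
  assumes "N > 0" "L > 0" "\<And>t. 1 \<le> \<bar>t\<bar> \<Longrightarrow> \<bar>t\<bar> < int Z \<Longrightarrow> percorr L x y t = 0"
    and "int N \<le> \<bar>\<tau>\<bar>" "\<bar>\<tau>\<bar> < int (N * Z - N)"
  shows "percorr (N * L) (kron_seq N x p) (kron_seq N y q) \<tau> = 0"
proof -
  define u where "u = \<tau> div int N"
  have \<tau>: "\<tau> = u * int N + \<tau> mod int N" "0 \<le> \<tau> mod int N" "\<tau> mod int N < int N"
    using assms(1) by (simp_all add: u_def)
  have "\<bar>u\<bar> < int Z" "\<bar>u + 1\<bar> < int Z"
    using abs_div_less_of_abs_less_mult_diff[OF assms(1,5)] by (simp_all add: u_def)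
  moreover have "u \<noteq> 0"
    using \<tau> assms(4) by auto
  moreover have "apercorr N p q (\<tau> mod int N - int N) = 0" if "u + 1 = 0"
  proof -
    have "u = - 1"
      using that by simp
    then have "\<tau> mod int N - int N = \<tau>"
      using \<tau>(1) by simp
    then show ?thesis
      using assms(4) by (simp add: apercorr_eq_0)
  qed
  ultimately show ?thesis
    using assms(3) by (cases "u + 1 = 0") (simp_all add: percorr_kron_seq[OF assms(1,2)] u_def[symmetric])
qed

theorem theorem1:
  fixes K L N Z :: nat
    and \<Omega> :: "nat set"
    and a B b c :: "nat \<Rightarrow> nat \<Rightarrow> complex"
  assumes "K > 0" "L > 0" "N > 0" "Z \<ge> 2"
    and "\<Omega> \<subseteq> {0..<N}"
    and "zcz_set K L Z a"
    and "\<forall>i\<in>{1..K}. \<forall>l<L. cmod (a i l) = 1"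
    and "\<forall>i\<in>{1..K}. \<forall>k\<in>\<Omega>. B i k = 0"
    and "b = (\<lambda>i. idft N (B i))"
    and "c = (\<lambda>i m. a i (m div N) * b i (m mod N))"
  shows "(\<forall>i\<in>{1..K}. \<forall>j\<in>{1..K}. i \<noteq> j \<longrightarrow>
            (\<forall>\<tau>::int. \<bar>\<tau>\<bar> < int (N * Z - N) \<longrightarrow> percorr (N * L) (c i) (c j) \<tau> = 0))
       \<and> quasi_zcz_set K (N * L) (N * Z - N) c
       \<and> (\<forall>i\<in>{1..K}. \<forall>l<L.
            (\<forall>k<N. dft N (\<lambda>n. c i (l * N + n)) k = a i l * B i k) \<and>
            (\<forall>k\<in>\<Omega>. dft N (\<lambda>n. c i (l * N + n)) k = 0))
       \<and> (\<forall>i\<in>{1..K}. \<forall>\<tau>::int.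
            (\<bar>\<tau>\<bar> < int N \<longrightarrow> percorr (N * L) (c i) (c i) \<tau> = of_nat L * apercorr N (b i) (b i) \<tau>) \<and>
            (int N \<le> \<bar>\<tau>\<bar> \<and> \<bar>\<tau>\<bar> < int (N * Z - N) \<longrightarrow> percorr (N * L) (c i) (c i) \<tau> = 0))"
proof -
  have c: "c i = kron_seq N (a i) (b i)" for i
    using assms(10) by (simp add: kron_seq_def fun_eq_iff)
  have a_auto_zero: "\<And>t. 1 \<le> \<bar>t\<bar> \<Longrightarrow> \<bar>t\<bar> < int Z \<Longrightarrow> percorr L (a i) (a i) t = 0" if "i \<in> {1..K}" for i
    using assms(6) that unfolding zcz_set_def by blast
  have a_cross_zero: "\<And>t. \<bar>t\<bar> < int Z \<Longrightarrow> percorr L (a i) (a j) t = 0"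
    if "i \<in> {1..K}" "j \<in> {1..K}" "i \<noteq> j" for i j
    using assms(6) that unfolding zcz_set_def by blast
  have c_cross: "\<forall>i\<in>{1..K}. \<forall>j\<in>{1..K}. i \<noteq> j \<longrightarrow>
      (\<forall>\<tau>::int. \<bar>\<tau>\<bar> < int (N * Z - N) \<longrightarrow> percorr (N * L) (c i) (c j) \<tau> = 0)"
    using assms(2,3) by (auto simp: c intro!: percorr_kron_seq_eq_0 a_cross_zero)
  have block_dft: "dft N (\<lambda>n. c i (l * N + n)) k = a i l * B i k" if "k < N" for i l k
    using that by (simp add: c dft_kron_seq_block assms(9) dft_idft)
  have c_auto_within: "percorr (N * L) (c i) (c i) \<tau> = of_nat L * apercorr N (b i) (b i) \<tau>"
    if "i \<in> {1..K}" "\<bar>\<tau>\<bar> < int N" for i \<tau>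
    using that assms(2-4,7) a_auto_zero[OF that(1)]
    by (simp add: c percorr_kron_seq_within_block percorr_zero_unimodular)
  have c_auto_outside: "percorr (N * L) (c i) (c i) \<tau> = 0"
    if "i \<in> {1..K}" "int N \<le> \<bar>\<tau>\<bar>" "\<bar>\<tau>\<bar> < int (N * Z - N)" for i \<tau>
    unfolding c using assms(3,2) a_auto_zero[OF that(1)] that(2,3) by (rule percorr_kron_seq_outside_block)
  show ?thesis
    unfolding quasi_zcz_set_def using c_cross block_dft assms(5,8) c_auto_within c_auto_outside by auto
qed

end
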